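(* Fix an integer $k\ge2$ and let $\rho_k$ be the smallest positive real root of $1-4x+2^{k+1}x^{k+1}=0$. Then, as $n\to\infty$, $$f^{(n)}_k\sim \frac14\sqrt{\frac{4\rho_k-(k+1)2^{k+1}\rho_k^{k+1}}{\pi n^3}}\left(\frac{1}{\rho_k}\right)^{n},$$ where $f^{(n)}_k$ is the number of trees $t\in\mathcal{T}_n$ with $\gamma(t)\le k$, i.e. the coefficient of $x^n$ in $F^-_k(x)=\frac{1-\sqrt{1-4x+2^{k+1}x^{k+1}}}{2}$.
   Context: $\mathcal{T}_n$ is the set of ordered rooted binary trees (every internal node has exactly two ordered children) with $n$ leaves. A tree is a caterpillar if every node is either a leaf or has at least one leaf among its direct children. The subtree of $t$ at a node $v$ consists of $v$ and all its descendants, and $\gamma(t)$ is the largest number of leaves of a caterpillar occurring as the subtree of $t$ at some node. *)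

theory Defs
  imports Complex_Main "HOL-Library.Landau_Symbols"
begin

datatype btree = Leaf | Node btree btree

fun leaves :: "btree \<Rightarrow> nat" where
  "leaves Leaf = 1"
| "leaves (Node l r) = leaves l + leaves r"

fun subtrees :: "btree \<Rightarrow> btree set" where
  "subtrees Leaf = {Leaf}"
| "subtrees (Node l r) = insert (Node l r) (subtrees l \<union> subtrees r)"

fun caterpillar :: "btree \<Rightarrow> bool" where
  "caterpillar Leaf = True"
| "caterpillar (Node l r) = ((l = Leaf \<or> r = Leaf) \<and> caterpillar l \<and> caterpillar r)"

definition gamma :: "btree \<Rightarrow> nat" where
  "gamma t = Max (leaves ` {s \<in> subtrees t. caterpillar s})"

definition f_count :: "nat \<Rightarrow> nat \<Rightarrow> nat" where
  "f_count k n = card {t. leaves t = n \<and> gamma t \<le> k}"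

end

theory Submission
  imports Defs "HOL-Analysis.Analysis" "HOL-Computational_Algebra.Computational_Algebra"
    "HOL-Real_Asymp.Real_Asymp"
begin

(* Let F = sum f_n x^n.  A tree with n >= 2 leaves has gamma <= k iff both subtrees do and it is
      not itself a caterpillar with k+1 leaves; there are 2^(k-1) of those.  Hence
      F = x + F^2 - 2^(k-1) x^(k+1), i.e. (1 - 2F)^2 = P(x) = 1 - 4x + 2^(k+1) x^(k+1).
   2. Algebra.  rho is a simple root of P and the only one in the closed disc |z| <= rho, so
      P = (1 - x/rho) Q with Q(0) = 1, Q(rho) = -rho P'(rho) = K > 0 and all roots of Q of modulus
      > R for some R > rho.  Such a Q has a power series square root T with coefficients
      O(n^d R^-n); by uniqueness of square roots with constant term 1, 1 - 2F = sqrt(1 - x/rho) T.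
   3. Analysis.  The coefficients of sqrt(1 - x/rho) are (1/2 gchoose n) (-1/rho)^n, which behave
      like -rho^-n / (2 sqrt(pi) n^(3/2)) (Gamma function).  Convolving with the geometrically
      smaller coefficients of T multiplies this by T(rho) (dominated convergence).
   Finally T(rho)^2 = Q(rho) = K and the sign of f_n force T(rho) = sqrt K, which yields
   n^(3/2) rho^n f_n --> sqrt K / (4 sqrt pi), a reformulation of the theorem. *)


subsection \<open>Trees and caterpillars\<close>

lemma leaves_pos: "leaves t \<ge> 1"
  by (induction t) auto

lemma leaves_eq_1_iff: "leaves t = 1 \<longleftrightarrow> t = Leaf"
proof (cases t)
  case (Node l r)
  have "leaves l \<ge> 1" "leaves r \<ge> 1" by (rule leaves_pos)+
  then show ?thesis using Node by simp
qed simp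

lemma finite_subtrees: "finite (subtrees t)"
  by (induction t) auto

lemma self_in_subtrees: "t \<in> subtrees t"
  by (cases t) auto

lemma Leaf_in_subtrees: "Leaf \<in> subtrees t"
  by (induction t) auto

lemma subtrees_leaves_le: "s \<in> subtrees t \<Longrightarrow> leaves s \<le> leaves t"
  by (induction t) auto

text \<open>Unlike \<open>gamma\<close>, this predicate decomposes recursively.\<close>

definition good :: "nat \<Rightarrow> btree \<Rightarrow> bool" where
  "good k t = (\<forall>s\<in>subtrees t. caterpillar s \<longrightarrow> leaves s \<le> k)"

lemma gamma_le_iff_good: "gamma t \<le> k \<longleftrightarrow> good k t"
proof -
  have fin: "finite (leaves ` {s \<in> subtrees t. caterpillar s})"
    using finite_subtrees by auto
  have ne: "leaves ` {s \<in> subtrees t. caterpillar s} \<noteq> {}"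
    using Leaf_in_subtrees[of t] by force
  show ?thesis unfolding gamma_def good_def
    using Max_le_iff[OF fin ne] by auto
qed

lemma good_Node:
  "good k (Node l r) \<longleftrightarrow> good k l \<and> good k r \<and> \<not> (caterpillar (Node l r) \<and> leaves l + leaves r > k)"
  by (auto simp: good_def simp del: caterpillar.simps)

text \<open>A caterpillar assembled from two good trees has at most \<open>k + 1\<close> leaves, so the only
  forbidden combinations are the caterpillars with exactly \<open>k + 1\<close> leaves.\<close>

lemma good_caterpillar_bound:
  assumes "good k l" "good k r" "caterpillar (Node l r)"
  shows "leaves l + leaves r \<le> k + 1"
proof -
  have "l = Leaf \<or> r = Leaf" "caterpillar l" "caterpillar r" using assms(3) by auto
  moreover have "leaves l \<le> k" using assms(1) \<open>caterpillar l\<close> self_in_subtrees[of l] by (auto simp: good_def)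
  moreover have "leaves r \<le> k" using assms(2) \<open>caterpillar r\<close> self_in_subtrees[of r] by (auto simp: good_def)
  ultimately show ?thesis by auto
qed

lemma good_small: "leaves t \<le> k \<Longrightarrow> good k t"
  using subtrees_leaves_le by (auto simp: good_def) (meson le_trans)

definition trees_with :: "nat \<Rightarrow> btree set" where
  "trees_with n = {t. leaves t = n}"

lemma finite_trees_with: "finite (trees_with n)"
proof (induction n rule: less_induct)
  case (less n)
  have "trees_with n \<subseteq> {Leaf} \<union> (\<Union>i\<in>{1..<n}. (\<lambda>(l,r). Node l r) ` (trees_with i \<times> trees_with (n - i)))"
  proof
    fix t assume "t \<in> trees_with n"
    then show "t \<in> {Leaf} \<union> (\<Union>i\<in>{1..<n}. (\<lambda>(l,r). Node l r) ` (trees_with i \<times> trees_with (n - i)))"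
    proof (cases t)
      case (Node l r)
      then have "leaves l \<in> {1..<n}" "leaves r = n - leaves l"
        using \<open>t \<in> trees_with n\<close> leaves_pos[of l] leaves_pos[of r] by (auto simp: trees_with_def)
      then show ?thesis using Node by (auto simp: trees_with_def)
    qed auto
  qed
  moreover have "finite ({Leaf} \<union> (\<Union>i\<in>{1..<n}. (\<lambda>(l,r). Node l r) ` (trees_with i \<times> trees_with (n - i))))"
    using less by auto
  ultimately show ?case by (rule finite_subset)
qed

definition caterpillars :: "nat \<Rightarrow> btree set" where
  "caterpillars n = {t. caterpillar t \<and> leaves t = n}"

text \<open>A caterpillar with \<open>m + 1\<close> leaves is a caterpillar with \<open>m\<close> leaves with a leaf attached on
  the left or on the right.\<close>

lemma card_caterpillars: assumes "2 \<le> m" shows "card (caterpillars m) = 2 ^ (m - 2)"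
  using assms
proof (induction m rule: nat_induct_at_least)
  case base
  have "caterpillars 2 = {Node Leaf Leaf}"
  proof safe
    fix t assume t: "t \<in> caterpillars 2"
    then show "t = Node Leaf Leaf"
    proof (cases t)
      case (Node l r)
      have "leaves l \<ge> 1" "leaves r \<ge> 1" by (rule leaves_pos)+
      then have "leaves l = 1" "leaves r = 1" using t Node by (auto simp: caterpillars_def)
      then have "l = Leaf" "r = Leaf" by (simp_all only: leaves_eq_1_iff)
      then show ?thesis using Node by simp
    qed (auto simp: caterpillars_def)
  qed (auto simp: caterpillars_def)
  then show ?case by simp
next
  case (Suc m)
  have "caterpillars (Suc m) = Node Leaf ` caterpillars m \<union> (\<lambda>c. Node c Leaf) ` caterpillars m"
  proof (intro equalityI subsetI)
    fix t assume "t \<in> caterpillars (Suc m)"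
    then show "t \<in> Node Leaf ` caterpillars m \<union> (\<lambda>c. Node c Leaf) ` caterpillars m"
      using Suc(1) by (cases t) (auto simp: caterpillars_def)
  qed (auto simp: caterpillars_def)
  moreover have "Node Leaf ` caterpillars m \<inter> (\<lambda>c. Node c Leaf) ` caterpillars m = {}"
    using Suc(1) by (auto simp: caterpillars_def)
  moreover have "finite (caterpillars m)"
    using finite_trees_with[of m] by (rule finite_subset[rotated]) (auto simp: caterpillars_def trees_with_def)
  ultimately have "card (caterpillars (Suc m)) = card (caterpillars m) + card (caterpillars m)"
    by (simp add: card_Un_disjoint card_image inj_on_def)
  moreover have "m - Suc 0 = Suc (m - 2)" using Suc(1) by arith
  ultimately show ?case using Suc(1,2) by simp
qed

definition good_trees :: "nat \<Rightarrow> nat \<Rightarrow> btree set" where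
  "good_trees k n = {t. leaves t = n \<and> good k t}"

lemma f_count_good_trees: "f_count k n = card (good_trees k n)"
  by (simp add: f_count_def good_trees_def gamma_le_iff_good)

lemma finite_good_trees: "finite (good_trees k n)"
  using finite_trees_with[of n] by (rule finite_subset[rotated]) (auto simp: good_trees_def trees_with_def)

definition good_pairs :: "nat \<Rightarrow> nat \<Rightarrow> btree set" where
  "good_pairs k n = (\<Union>i\<in>{1..n-1}. (\<lambda>(l,r). Node l r) ` (good_trees k i \<times> good_trees k (n - i)))"

lemma good_trees_eq:
  assumes "n \<ge> 2"
  shows "good_trees k n = good_pairs k n - (if n = k + 1 then caterpillars n else {})"
proof safe
  fix t assume t: "t \<in> good_trees k n"
  then show "t \<in> good_pairs k n"
  proof (cases t)
    case Leaf then show ?thesis using t assms by (auto simp: good_trees_def)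
  next
    case (Node l r)
    have "leaves l \<in> {1..n-1}" using t Node leaves_pos[of l] leaves_pos[of r] by (auto simp: good_trees_def)
    moreover have "l \<in> good_trees k (leaves l)" "r \<in> good_trees k (n - leaves l)"
      using t Node by (auto simp: good_trees_def good_Node)
    ultimately show ?thesis unfolding good_pairs_def using Node by blast
  qed
next
  fix t assume "t \<in> good_trees k n" "t \<in> (if n = k + 1 then caterpillars n else {})"
  then show False using self_in_subtrees[of t]
    by (auto simp: good_trees_def caterpillars_def good_def split: if_splits)
next
  fix t assume t: "t \<in> good_pairs k n" "t \<notin> (if n = k + 1 then caterpillars n else {})"
  then obtain l r i where lr: "t = Node l r" "i \<in> {1..n-1}" "l \<in> good_trees k i" "r \<in> good_trees k (n - i)"
    unfolding good_pairs_def by auto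
  have ln: "leaves t = n" using lr by (auto simp: good_trees_def)
  have "good k l" "good k r" using lr by (auto simp: good_trees_def)
  moreover have "\<not> (caterpillar (Node l r) \<and> leaves l + leaves r > k)"
  proof
    assume c: "caterpillar (Node l r) \<and> leaves l + leaves r > k"
    then have "leaves l + leaves r \<le> k + 1" using good_caterpillar_bound calculation by blast
    then have "n = k + 1" using c ln lr by simp
    then show False using t(2) c ln lr by (auto simp: caterpillars_def)
  qed
  ultimately show "t \<in> good_trees k n" using ln lr by (simp add: good_trees_def good_Node)
qed

lemma caterpillars_sub_good_pairs:
  assumes "k \<ge> 1"
  shows "caterpillars (k + 1) \<subseteq> good_pairs k (k + 1)"
proof
  fix t assume t: "t \<in> caterpillars (k + 1)"
  then show "t \<in> good_pairs k (k + 1)"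
  proof (cases t)
    case Leaf then show ?thesis using t assms by (auto simp: caterpillars_def)
  next
    case (Node l r)
    have "leaves l \<in> {1..k}" using t Node leaves_pos[of l] leaves_pos[of r] by (auto simp: caterpillars_def)
    moreover have "l \<in> good_trees k (leaves l)" "r \<in> good_trees k (k + 1 - leaves l)"
      using t Node leaves_pos[of l] leaves_pos[of r]
      by (auto simp: good_trees_def caterpillars_def intro!: good_small)
    ultimately show ?thesis unfolding good_pairs_def using Node by force
  qed
qed

lemma card_good_pairs: "card (good_pairs k n) = (\<Sum>i=1..n-1. f_count k i * f_count k (n - i))"
  unfolding good_pairs_def f_count_good_trees
proof (subst card_UN_disjoint)
  show "\<forall>i\<in>{1..n - 1}. \<forall>j\<in>{1..n - 1}. i \<noteq> j \<longrightarrow> (\<lambda>(l, r). Node l r) ` (good_trees k i \<times> good_trees k (n - i))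
      \<inter> (\<lambda>(l, r). Node l r) ` (good_trees k j \<times> good_trees k (n - j)) = {}"
    by (auto simp: good_trees_def)
  show "(\<Sum>i = 1..n - 1. card ((\<lambda>(l, r). Node l r) ` (good_trees k i \<times> good_trees k (n - i)))) =
    (\<Sum>i = 1..n - 1. card (good_trees k i) * card (good_trees k (n - i)))"
    by (intro sum.cong refl, subst card_image) (auto simp: inj_on_def card_cartesian_product)
qed (use finite_good_trees in auto)

lemma f_count_0: "f_count k 0 = 0"
proof -
  have "good_trees k 0 = {}" using leaves_pos by (auto simp: good_trees_def Suc_le_eq)
  then show ?thesis by (simp add: f_count_good_trees)
qed

lemma f_count_1: assumes "k \<ge> 1" shows "f_count k 1 = 1"
proof -
  have "good_trees k 1 = {Leaf}"
    unfolding good_trees_def using assms good_small[of Leaf k] leaves_eq_1_iff by auto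
  then show ?thesis by (simp add: f_count_good_trees)
qed

lemma f_count_rec:
  assumes "k \<ge> 2" "n \<ge> 2"
  shows "f_count k n + (if n = k + 1 then 2 ^ (k - 1) else 0) = (\<Sum>i=1..n-1. f_count k i * f_count k (n - i))"
proof (cases "n = k + 1")
  case True
  have fin: "finite (good_pairs k n)" unfolding good_pairs_def using finite_good_trees by auto
  have sub: "caterpillars n \<subseteq> good_pairs k n" using caterpillars_sub_good_pairs[of k] assms(1) True by simp
  have "card (good_trees k n) = card (good_pairs k n) - card (caterpillars n)"
    using good_trees_eq[OF assms(2)] True card_Diff_subset[OF finite_subset[OF sub fin] sub] by simp
  moreover have "card (caterpillars n) \<le> card (good_pairs k n)" by (rule card_mono[OF fin sub])
  moreover have "card (caterpillars n) = 2 ^ (k - 1)" using card_caterpillars[of n] True assms by simp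
  ultimately show ?thesis using True card_good_pairs[of k n] by (simp only: f_count_good_trees) simp
next
  case False
  then have "good_trees k n = good_pairs k n" using good_trees_eq[OF assms(2)] by simp
  then show ?thesis using False card_good_pairs[of k n] by (simp only: f_count_good_trees) simp
qed


subsection \<open>The generating function\<close>

definition Fgen :: "nat \<Rightarrow> complex fps" where
  "Fgen k = Abs_fps (\<lambda>n. of_nat (f_count k n))"

definition Pk :: "nat \<Rightarrow> complex poly" where
  "Pk k = [:1, -4:] + monom (2 ^ (k + 1)) (k + 1)"

lemma poly_Pk: "poly (Pk k) z = 1 - 4 * z + 2 ^ (k + 1) * z ^ (k + 1)"
  by (simp add: Pk_def poly_monom)

lemma poly_pderiv_Pk: "poly (pderiv (Pk k)) z = - 4 + of_nat (k + 1) * 2 ^ (k + 1) * z ^ k"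
  by (simp add: Pk_def pderiv_add pderiv_pCons pderiv_monom poly_monom)

lemma Fgen_equation:
  assumes "k \<ge> 2"
  shows "Fgen k * Fgen k = Fgen k - fps_X + fps_const (2 ^ (k - 1)) * fps_X ^ (k + 1)"
proof (rule fps_ext)
  fix n
  have conv: "(\<Sum>i=0..n. f_count k i * f_count k (n - i)) = (\<Sum>i=1..n-1. f_count k i * f_count k (n - i))"
    if "n \<ge> 1"
  proof (rule sum.mono_neutral_right)
    show "\<forall>i\<in>{0..n} - {1..n-1}. f_count k i * f_count k (n - i) = 0"
      using that by (auto simp: f_count_0 not_less_eq_eq)
  qed auto
  have lhs: "fps_nth (Fgen k * Fgen k) n = of_nat (\<Sum>i=0..n. f_count k i * f_count k (n - i))"
    by (simp add: Fgen_def fps_mult_nth)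
  consider "n = 0" | "n = 1" | "n \<ge> 2" by linarith
  then show "fps_nth (Fgen k * Fgen k) n = fps_nth (Fgen k - fps_X + fps_const (2 ^ (k - 1)) * fps_X ^ (k + 1)) n"
  proof cases
    case 2 then show ?thesis
      using assms lhs f_count_1[of k] by (simp add: Fgen_def f_count_0)
  next
    case 3
    then have "(\<Sum>i=0..n. f_count k i * f_count k (n - i)) = f_count k n + (if n = k + 1 then 2 ^ (k - 1) else 0)"
      using conv f_count_rec[OF assms 3] by simp
    then show ?thesis using 3 unfolding lhs by (auto simp: Fgen_def)
  qed (simp add: lhs Fgen_def f_count_0)
qed

lemma fps_of_poly_Pk: "fps_of_poly (Pk k) = 1 - 4 * fps_X + fps_const (2 ^ (k + 1)) * fps_X ^ (k + 1)"
  unfolding Pk_def fps_of_poly_add fps_of_poly_monom fps_of_poly_linear'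
  by (simp add: numeral_fps_const)

lemma Fgen_square:
  assumes "k \<ge> 2"
  shows "(1 - 2 * Fgen k) * (1 - 2 * Fgen k) = fps_of_poly (Pk k)"
proof -
  have pow: "4 * (2::complex) ^ (k - 1) = 2 ^ (k + 1)"
  proof -
    have "k + 1 = Suc (Suc (k - 1))" using assms by simp
    then show ?thesis by (simp only: power_Suc mult.assoc) simp
  qed
  have "(1 - 2 * Fgen k) * (1 - 2 * Fgen k) = 1 - 4 * Fgen k + 4 * (Fgen k * Fgen k)"
    by (simp add: algebra_simps)
  also have "\<dots> = 1 - 4 * fps_X + (4 * fps_const (2 ^ (k - 1))) * fps_X ^ (k + 1)"
    unfolding Fgen_equation[OF assms] by (simp add: algebra_simps)
  also have "4 * fps_const (2 ^ (k - 1)) = fps_const (2 ^ (k + 1) :: complex)"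
    unfolding pow[symmetric] by (simp add: numeral_fps_const)
  finally show ?thesis unfolding fps_of_poly_Pk .
qed


subsection \<open>Power series square roots\<close>

definition binom_sqrt :: "complex \<Rightarrow> complex fps" where
  "binom_sqrt c = Abs_fps (\<lambda>n. of_real ((1/2::real) gchoose n) * c ^ n)"

lemma binom_sqrt_square: "binom_sqrt c * binom_sqrt c = fps_of_poly [:1, c:]"
proof (rule fps_ext)
  fix n
  have one_gchoose: "(1::real) gchoose m = (if m \<le> 1 then 1 else 0)" for m
    using binomial_gbinomial[of 1 m, where 'a=real] by (cases m) (auto simp: binomial_eq_0)
  have "fps_nth (binom_sqrt c * binom_sqrt c) n
      = (\<Sum>i=0..n. of_real (((1/2::real) gchoose i) * ((1/2) gchoose (n - i))) * c ^ n)"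
    unfolding fps_mult_nth binom_sqrt_def by (intro sum.cong refl) (auto simp: power_add[symmetric])
  also have "\<dots> = of_real (\<Sum>i=0..n. ((1/2::real) gchoose i) * ((1/2) gchoose (n - i))) * c ^ n"
    by (simp add: sum_distrib_right)
  also have "\<dots> = of_real ((1::real) gchoose n) * c ^ n"
    using gbinomial_Vandermonde[of "1/2::real" "1/2" n] by simp
  also have "\<dots> = fps_nth (fps_of_poly [:1, c:]) n"
    by (cases n) (auto simp: one_gchoose coeff_pCons split: nat.splits)
  finally show "fps_nth (binom_sqrt c * binom_sqrt c) n = fps_nth (fps_of_poly [:1, c:]) n" .
qed

lemma abs_half_gchoose_le_1: "\<bar>(1/2::real) gchoose n\<bar> \<le> 1"
proof (induction n)
  case (Suc k)
  have "real (Suc k) * ((1/2::real) gchoose Suc k) = (1/2 - real k) * ((1/2) gchoose k)"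
    using gbinomial_mult_1[of "1/2::real" k] by (simp add: algebra_simps)
  then have "real (Suc k) * \<bar>(1/2::real) gchoose Suc k\<bar> = \<bar>1/2 - real k\<bar> * \<bar>(1/2) gchoose k\<bar>"
    by (metis abs_mult abs_of_nat)
  also have "\<dots> \<le> real (Suc k) * 1"
    using Suc by (intro mult_mono) auto
  finally show ?case by (simp only: mult_le_cancel_left_pos of_nat_0_less_iff zero_less_Suc)
qed simp

lemma binom_sqrt_nth_bound: "cmod (fps_nth (binom_sqrt c) n) \<le> cmod c ^ n"
proof -
  have "cmod (fps_nth (binom_sqrt c) n) = \<bar>(1/2::real) gchoose n\<bar> * cmod c ^ n"
    by (simp add: binom_sqrt_def norm_mult norm_power)
  also have "\<dots> \<le> 1 * cmod c ^ n" using abs_half_gchoose_le_1 by (intro mult_right_mono) auto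
  finally show ?thesis by simp
qed

lemma fps_mult_nth_bound:
  fixes f g :: "complex fps"
  assumes "\<And>n. cmod (fps_nth f n) \<le> (real n + 1) ^ d * r ^ n" "\<And>n. cmod (fps_nth g n) \<le> r ^ n" "r \<ge> 0"
  shows "cmod (fps_nth (f * g) n) \<le> (real n + 1) ^ Suc d * r ^ n"
proof -
  have "cmod (fps_nth (f * g) n) \<le> (\<Sum>i=0..n. cmod (fps_nth f i) * cmod (fps_nth g (n - i)))"
    unfolding fps_mult_nth by (rule order_trans[OF norm_sum]) (simp add: norm_mult)
  also have "\<dots> \<le> (\<Sum>i=0..n. (real n + 1) ^ d * r ^ n)"
  proof (rule sum_mono)
    fix i assume i: "i \<in> {0..n}"
    have "cmod (fps_nth f i) * cmod (fps_nth g (n - i)) \<le> ((real i + 1) ^ d * r ^ i) * r ^ (n - i)"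
      using assms by (intro mult_mono) auto
    also have "\<dots> \<le> ((real n + 1) ^ d * r ^ i) * r ^ (n - i)"
      using i assms(3) by (intro mult_right_mono power_mono) auto
    also have "\<dots> = (real n + 1) ^ d * r ^ n"
      using i by (simp add: mult.assoc power_add[symmetric])
    finally show "cmod (fps_nth f i) * cmod (fps_nth g (n - i)) \<le> (real n + 1) ^ d * r ^ n" .
  qed
  also have "\<dots> = (real n + 1) ^ Suc d * r ^ n" by simp
  finally show ?thesis .
qed

lemma split_nonzero_root:
  fixes P :: "complex poly" and a :: complex
  assumes "poly P a = 0" "a \<noteq> 0"
  obtains Q where "P = [:1, -1/a:] * Q" "poly Q 0 = poly P 0" "poly Q a = - a * poly (pderiv P) a"
proof -
  obtain Q1 where Q1: "P = [:-a, 1:] * Q1" using assms(1) poly_eq_0_iff_dvd by (metis dvdE)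
  define Q where "Q = smult (-a) Q1"
  have split: "P = [:1, -1/a:] * Q"
    unfolding Q1 Q_def using assms(2) by (simp add: field_simps smult_add_right)
  have at0: "poly Q 0 = poly P 0" by (simp add: Q1 Q_def)
  have "poly (pderiv P) a = poly Q1 a" unfolding Q1 pderiv_mult by (simp add: pderiv_pCons)
  then have "poly Q a = - a * poly (pderiv P) a" by (simp add: Q_def)
  with split at0 show thesis by (rule that)
qed

text \<open>A polynomial with constant term 1 and no roots in the closed disc of radius \<open>R\<close> has a power
  series square root with constant term 1 whose coefficients are \<open>O(n^d R^-n)\<close>: factor it into
  linear factors \<open>1 - z/r\<close> with \<open>|r| > R\<close> and take binomial square roots of each factor.\<close>

lemma poly_fps_sqrt:
  fixes Q :: "complex poly" and R :: real
  assumes "R > 0" "poly Q 0 = 1" "\<And>z. poly Q z = 0 \<Longrightarrow> R < cmod z"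
  shows "\<exists>T. T * T = fps_of_poly Q \<and> fps_nth T 0 = 1 \<and> (\<forall>n. cmod (fps_nth T n) \<le> (real n + 1) ^ degree Q * (1/R) ^ n)"
  using assms(2,3)
proof (induction "degree Q" arbitrary: Q)
  case 0
  then have "Q = [:1:]" by (metis degree_eq_zeroE poly_pCons mult_zero_left add_0_right)
  then show ?case using assms(1) by (intro exI[of _ 1]) auto
next
  case (Suc m)
  have "\<not> constant (poly Q)" using Suc(2) constant_degree by (metis nat.distinct(1))
  then obtain r where r: "poly Q r = 0" using fundamental_theorem_of_algebra by blast
  have r0: "r \<noteq> 0" using r Suc(3) by auto
  have rR: "R < cmod r" using Suc(4) r by blast
  obtain Q2 where QQ2: "Q = [:1, -1/r:] * Q2" and Q20: "poly Q2 0 = 1"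
    using split_nonzero_root[OF r r0] Suc(3) by metis
  have "Q2 \<noteq> 0" using QQ2 Suc(3) by auto
  then have "degree Q = 1 + degree Q2"
    unfolding QQ2 using r0 by (subst degree_mult_eq) auto
  then have degQ2: "degree Q2 = m" using Suc(2) by simp
  have Q2roots: "R < cmod z" if "poly Q2 z = 0" for z
    using Suc(4)[of z] that QQ2 by simp
  obtain T2 where T2: "T2 * T2 = fps_of_poly Q2" "fps_nth T2 0 = 1"
    "\<forall>n. cmod (fps_nth T2 n) \<le> (real n + 1) ^ m * (1/R) ^ n"
    using Suc(1)[OF degQ2[symmetric] Q20 Q2roots] degQ2 by blast
  define T where "T = T2 * binom_sqrt (-1/r)"
  have "T * T = (binom_sqrt (-1/r) * binom_sqrt (-1/r)) * (T2 * T2)"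
    unfolding T_def by (simp add: algebra_simps)
  also have "\<dots> = fps_of_poly Q" unfolding binom_sqrt_square T2 QQ2 fps_of_poly_mult by simp
  finally have TT: "T * T = fps_of_poly Q" .
  have T0: "fps_nth T 0 = 1" using T2 by (simp add: T_def binom_sqrt_def)
  have "cmod (-1/r) \<le> 1/R" using rR assms(1) by (simp add: norm_divide frac_le)
  then have "cmod (fps_nth (binom_sqrt (-1/r)) n) \<le> (1/R) ^ n" for n
    using binom_sqrt_nth_bound[of "-1/r" n] by (meson norm_ge_zero order_trans power_mono)
  then have "cmod (fps_nth T n) \<le> (real n + 1) ^ Suc m * (1/R) ^ n" for n
    unfolding T_def using T2(3) assms(1) by (intro fps_mult_nth_bound) auto
  then show ?case using TT T0 Suc(2) by auto
qed

lemma fps_sqrt_unique: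
  fixes A B :: "complex fps"
  assumes "A * A = B * B" "fps_nth A 0 = 1" "fps_nth B 0 = 1"
  shows "A = B"
proof -
  have "(A - B) * (A + B) = 0" using assms(1) by (simp add: algebra_simps)
  moreover have "A + B \<noteq> 0"
  proof
    assume "A + B = 0"
    then have "fps_nth (A + B) 0 = 0" by simp
    then show False using assms(2,3) by simp
  qed
  ultimately show ?thesis by simp
qed

lemma fps_sqrt_eval:
  fixes T :: "complex fps" and Q :: "complex poly"
  assumes sq: "T * T = fps_of_poly Q" and sum: "summable (\<lambda>i. norm (fps_nth T i * z ^ i))"
  shows "(\<Sum>i. fps_nth T i * z ^ i) * (\<Sum>i. fps_nth T i * z ^ i) = poly Q z"
proof -
  have "(\<Sum>i. fps_nth T i * z ^ i) * (\<Sum>i. fps_nth T i * z ^ i)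
      = (\<Sum>n. \<Sum>i\<le>n. (fps_nth T i * z ^ i) * (fps_nth T (n - i) * z ^ (n - i)))"
    by (rule Cauchy_product[OF sum sum])
  also have "\<dots> = (\<Sum>n. coeff Q n * z ^ n)"
  proof (intro suminf_cong)
    fix n
    have "(\<Sum>i\<le>n. (fps_nth T i * z ^ i) * (fps_nth T (n - i) * z ^ (n - i))) = (\<Sum>i\<le>n. fps_nth T i * fps_nth T (n - i)) * z ^ n"
      unfolding sum_distrib_right by (intro sum.cong refl) (simp add: power_add[symmetric] algebra_simps)
    also have "\<dots> = coeff Q n * z ^ n"
      using arg_cong[OF sq, of "\<lambda>F. fps_nth F n"] by (simp add: fps_mult_nth atLeast0AtMost)
    finally show "(\<Sum>i\<le>n. (fps_nth T i * z ^ i) * (fps_nth T (n - i) * z ^ (n - i))) = coeff Q n * z ^ n" .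
  qed
  also have "\<dots> = (\<Sum>n\<le>degree Q. coeff Q n * z ^ n)"
    by (rule suminf_finite) (auto simp: coeff_eq_0)
  also have "\<dots> = poly Q z" by (simp add: poly_altdef)
  finally show ?thesis .
qed


subsection \<open>The polynomial \<open>1 - 4x + 2^(k+1) x^(k+1)\<close> near its smallest root\<close>

lemma geometric_partial_sum: "(1 - w) * (\<Sum>j=1..k. w ^ j) = w - (w::'a::comm_ring_1) ^ (k + 1)"
proof (induction k)
  case (Suc k)
  have "(1 - w) * (\<Sum>j=1..Suc k. w ^ j) = (1 - w) * (\<Sum>j=1..k. w ^ j) + (1 - w) * w ^ Suc k"
    by (simp add: distrib_left)
  also have "\<dots> = w - w ^ (Suc k + 1)" using Suc by (simp add: algebra_simps)
  finally show ?case .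
qed simp

text \<open>With \<open>\<sigma> = 2\<rho>\<close> the equation reads \<open>1 - 2\<sigma> + \<sigma>^(k+1) = 0\<close>, i.e.
  \<open>\<sigma> + \<sigma>\<^sup>2 + \<dots> + \<sigma>^k = 1\<close> once we know \<open>\<sigma> < 1\<close>; the latter holds because the root is
  smallest and there is a root below \<open>7/20\<close>.  This also gives \<open>-\<rho> P'(\<rho>) = 1 - k \<sigma>^(k+1) > 0\<close>.\<close>

lemma rho_properties:
  fixes k :: nat and \<rho> :: real
  assumes k: "k \<ge> 2" and rp: "\<rho> > 0"
    and hP: "1 - 4 * \<rho> + 2 ^ (k + 1) * \<rho> ^ (k + 1) = 0"
    and hmin: "\<And>y::real. 0 < y \<Longrightarrow> y < \<rho> \<Longrightarrow> 1 - 4 * y + 2 ^ (k + 1) * y ^ (k + 1) \<noteq> 0"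
  shows "\<rho> < 1/2" "(\<Sum>j=1..k. (2 * \<rho>) ^ j) = 1"
    "4 * \<rho> - real (k + 1) * 2 ^ (k + 1) * \<rho> ^ (k + 1) > 0"
proof -
  define g where "g y = 1 - 4 * y + 2 ^ (k + 1) * y ^ (k + 1)" for y :: real
  have g0: "g 0 = 1" by (simp add: g_def)
  have "(7/10::real) ^ (k + 1) \<le> (7/10) ^ 3" using k by (intro power_decreasing) auto
  moreover have "g (7/20) = 1 - 7/5 + (7/10::real) ^ (k + 1)"
    by (simp add: g_def power_mult_distrib[symmetric])
  moreover have "(7/10::real) ^ 3 = 343/1000" by (simp add: eval_nat_numeral)
  ultimately have g1: "g (7/20) \<le> 0" by linarith
  have "\<exists>x. 0 \<le> x \<and> x \<le> 7/20 \<and> g x = 0"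
  proof (rule IVT2[of g "7/20" 0 0])
    show "\<forall>x. 0 \<le> x \<and> x \<le> 7 / 20 \<longrightarrow> isCont g x" unfolding g_def by (auto intro!: continuous_intros)
  qed (use g0 g1 in auto)
  then obtain x where x: "0 \<le> x" "x \<le> 7/20" "g x = 0" by blast
  have "x \<noteq> 0" using x g0 by auto
  then have "\<rho> \<le> x" using hmin[of x] x by (force simp: g_def)
  then show r12: "\<rho> < 1/2" using x by simp
  define \<sigma> where "\<sigma> = 2 * \<rho>"
  have s: "0 < \<sigma>" "\<sigma> < 1" using rp r12 by (auto simp: \<sigma>_def)
  have sk: "\<sigma> ^ (k + 1) = 2 * \<sigma> - 1"
    using hP unfolding \<sigma>_def power_mult_distrib by linarith
  have "(1 - \<sigma>) * (\<Sum>j=1..k. \<sigma> ^ j) = (1 - \<sigma>) * 1"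
    using geometric_partial_sum[of \<sigma> k] sk by simp
  then show S1: "(\<Sum>j=1..k. (2 * \<rho>) ^ j) = 1" using s unfolding \<sigma>_def by simp
  have "(\<Sum>j=1..k. \<sigma> ^ k) \<le> (\<Sum>j=1..k. \<sigma> ^ j)"
    using s by (intro sum_mono power_decreasing) auto
  then have "real k * \<sigma> ^ k \<le> 1" using S1 by (simp add: \<sigma>_def)
  moreover have "\<sigma> ^ (k + 1) < \<sigma> ^ k" using s by simp
  ultimately have "real k * \<sigma> ^ (k + 1) < 1" using k
    by (smt (verit, best) mult_strict_left_mono of_nat_0_less_iff zero_less_numeral le_less_trans order_less_le_trans)
  moreover have "4 * \<rho> - real (k + 1) * 2 ^ (k + 1) * \<rho> ^ (k + 1) = 1 - real k * \<sigma> ^ (k + 1)"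
    using sk by (simp add: \<sigma>_def power_mult_distrib algebra_simps)
  ultimately show "4 * \<rho> - real (k + 1) * 2 ^ (k + 1) * \<rho> ^ (k + 1) > 0" by simp
qed

text \<open>\<open>\<rho>\<close> is the only complex root of \<open>P\<close> in the closed disc of radius \<open>\<rho>\<close>: for a root \<open>w = 2z\<close>
  with \<open>|w| \<le> \<sigma>\<close>, \<open>w + \<dots> + w^k = 1 = \<sigma> + \<dots> + \<sigma>^k\<close> forces \<open>Re (w^j) = \<sigma>^j\<close> for all \<open>j\<close>.\<close>

lemma Pk_root_in_disc:
  fixes k :: nat and \<rho> :: real and z :: complex
  assumes k: "k \<ge> 2" and r12: "\<rho> < 1/2" and S1: "(\<Sum>j=1..k. (2 * \<rho>) ^ j) = 1"
    and hz: "poly (Pk k) z = 0" and zr: "cmod z \<le> \<rho>"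
  shows "z = of_real \<rho>"
proof -
  define w where "w = 2 * z"
  define \<sigma> where "\<sigma> = 2 * \<rho>"
  have wn: "cmod w \<le> \<sigma>" using zr by (simp add: w_def \<sigma>_def norm_mult)
  have "1 - 2 * w + w ^ (k + 1) = 0"
    using hz unfolding poly_Pk w_def power_mult_distrib by simp
  moreover have "(1 - w) * (1 - (\<Sum>j=1..k. w ^ j)) = (1 - w) - (1 - w) * (\<Sum>j=1..k. w ^ j)"
    by (simp add: algebra_simps)
  moreover have "\<dots> = 1 - 2 * w + w ^ (k + 1)"
    unfolding geometric_partial_sum by (simp add: algebra_simps)
  ultimately have "(1 - w) * (1 - (\<Sum>j=1..k. w ^ j)) = 0" by simp
  moreover have "w \<noteq> 1" using wn r12 by (auto simp: \<sigma>_def)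
  ultimately have Sw: "(\<Sum>j=1..k. w ^ j) = 1" by simp
  have "(\<Sum>j=1..k. Re (w ^ j)) = 1" using arg_cong[OF Sw, of Re] by (simp add: Re_sum)
  then have "(\<Sum>j=1..k. (\<sigma> ^ j - Re (w ^ j))) = 0" using S1 by (simp add: sum_subtractf \<sigma>_def)
  moreover have "\<forall>j\<in>{1..k}. \<sigma> ^ j - Re (w ^ j) \<ge> 0"
  proof
    fix j
    have "Re (w ^ j) \<le> cmod w ^ j" using complex_Re_le_cmod[of "w ^ j"] by (simp add: norm_power)
    also have "\<dots> \<le> \<sigma> ^ j" using wn by (intro power_mono) auto
    finally show "\<sigma> ^ j - Re (w ^ j) \<ge> 0" by simp
  qed
  ultimately have "\<forall>j\<in>{1..k}. \<sigma> ^ j - Re (w ^ j) = 0"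
    using sum_nonneg_eq_0_iff[of "{1..k}" "\<lambda>j. \<sigma> ^ j - Re (w ^ j)"] by auto
  then have Rw: "Re w = \<sigma>" using k by force
  have "(Re w)\<^sup>2 + (Im w)\<^sup>2 \<le> \<sigma>\<^sup>2"
    using wn by (metis cmod_power2 norm_ge_zero power_mono)
  then have "Im w = 0" using Rw by simp
  then have "w = of_real \<sigma>" using Rw by (simp add: complex_eq_iff)
  then show ?thesis by (simp add: w_def \<sigma>_def)
qed

text \<open>A nonzero polynomial whose roots all lie outside the closed disc of radius \<open>r\<close> has them
  outside a strictly larger disc (there are only finitely many).\<close>

lemma roots_outside_larger_disc:
  fixes Q :: "complex poly"
  assumes "Q \<noteq> 0" "\<And>z. poly Q z = 0 \<Longrightarrow> r < cmod z"
  shows "\<exists>R > r. \<forall>z. poly Q z = 0 \<longrightarrow> R < cmod z"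
proof -
  define m where "m = Min (insert (r + 1) (cmod ` {z. poly Q z = 0}))"
  have fin: "finite {z. poly Q z = 0}" using poly_roots_finite[OF assms(1)] .
  have "r < m" unfolding m_def using fin assms(2) by auto
  moreover have "m \<le> cmod z" if "poly Q z = 0" for z
    unfolding m_def using fin that by auto
  ultimately show ?thesis by (intro exI[of _ "(r + m) / 2"]) force
qed

lemma Pk_cofactor:
  fixes k :: nat and \<rho> :: real
  assumes k: "k \<ge> 2" and rp: "\<rho> > 0"
    and hP: "1 - 4 * \<rho> + 2 ^ (k + 1) * \<rho> ^ (k + 1) = 0"
    and "\<And>y::real. 0 < y \<Longrightarrow> y < \<rho> \<Longrightarrow> 1 - 4 * y + 2 ^ (k + 1) * y ^ (k + 1) \<noteq> 0"
  shows "\<exists>Q. Pk k = [:1, -1 / of_real \<rho>:] * Q \<and> poly Q 0 = 1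
    \<and> poly Q (of_real \<rho>) = of_real (4 * \<rho> - real (k + 1) * 2 ^ (k + 1) * \<rho> ^ (k + 1))
    \<and> (\<forall>z. poly Q z = 0 \<longrightarrow> \<rho> < cmod z)"
proof -
  note rho = rho_properties[OF assms]
  define K where "K = 4 * \<rho> - real (k + 1) * 2 ^ (k + 1) * \<rho> ^ (k + 1)"
  have "K > 0" using rho(3) by (simp add: K_def)
  define \<rho>c :: complex where "\<rho>c = of_real \<rho>"
  have "complex_of_real (1 - 4 * \<rho> + 2 ^ (k + 1) * \<rho> ^ (k + 1)) = 0" using hP by simp
  then have "poly (Pk k) \<rho>c = 0" by (simp add: poly_Pk \<rho>c_def)
  moreover have "\<rho>c \<noteq> 0" using rp by (simp add: \<rho>c_def)
  ultimately obtain Q where Q: "Pk k = [:1, -1/\<rho>c:] * Q" "poly Q 0 = poly (Pk k) 0"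
    "poly Q \<rho>c = - \<rho>c * poly (pderiv (Pk k)) \<rho>c"
    by (rule split_nonzero_root)
  have QK: "poly Q \<rho>c = of_real K"
    unfolding Q(3) poly_pderiv_Pk by (simp add: \<rho>c_def K_def algebra_simps)
  have Q0: "poly Q 0 = 1" using Q(2) by (simp add: poly_Pk)
  have roots: "\<rho> < cmod z" if "poly Q z = 0" for z
  proof (rule ccontr)
    assume "\<not> \<rho> < cmod z"
    moreover have "poly (Pk k) z = 0" using that Q(1) by simp
    ultimately have "z = \<rho>c" using Pk_root_in_disc[OF k rho(1,2)] by (simp add: \<rho>c_def)
    then show False using that QK \<open>K > 0\<close> by simp
  qed
  with Q(1) Q0 QK show ?thesis unfolding \<rho>c_def K_def by blast
qed

lemma Fgen_factorization:
  fixes k :: nat and \<rho> :: real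
  assumes k: "k \<ge> 2" and rp: "\<rho> > 0"
    and "1 - 4 * \<rho> + 2 ^ (k + 1) * \<rho> ^ (k + 1) = 0"
    and "\<And>y::real. 0 < y \<Longrightarrow> y < \<rho> \<Longrightarrow> 1 - 4 * y + 2 ^ (k + 1) * y ^ (k + 1) \<noteq> 0"
  shows "\<exists>(T :: complex fps) (Q :: complex poly) R (d :: nat). \<rho> < R
    \<and> (\<forall>n. cmod (fps_nth T n) \<le> (real n + 1) ^ d * (1/R) ^ n)
    \<and> T * T = fps_of_poly Q
    \<and> poly Q (of_real \<rho>) = of_real (4 * \<rho> - real (k + 1) * 2 ^ (k + 1) * \<rho> ^ (k + 1))
    \<and> 1 - 2 * Fgen k = binom_sqrt (- 1 / of_real \<rho>) * T"
proof -
  define \<rho>c :: complex where "\<rho>c = of_real \<rho>"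
  obtain Q where Q: "Pk k = [:1, -1/\<rho>c:] * Q" and Q0: "poly Q 0 = 1"
    and QK: "poly Q \<rho>c = of_real (4 * \<rho> - real (k + 1) * 2 ^ (k + 1) * \<rho> ^ (k + 1))"
    and roots: "\<And>z. poly Q z = 0 \<Longrightarrow> \<rho> < cmod z"
    using Pk_cofactor[OF assms] unfolding \<rho>c_def by blast
  have "Q \<noteq> 0" using Q0 by auto
  then obtain R where R: "\<rho> < R" "\<And>z. poly Q z = 0 \<Longrightarrow> R < cmod z"
    using roots_outside_larger_disc[of Q \<rho>] roots by blast
  obtain T where T: "T * T = fps_of_poly Q" "fps_nth T 0 = 1"
    "\<And>n. cmod (fps_nth T n) \<le> (real n + 1) ^ degree Q * (1/R) ^ n"
    using poly_fps_sqrt[of R Q] R rp Q0 by auto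
  have "(binom_sqrt (-1/\<rho>c) * T) * (binom_sqrt (-1/\<rho>c) * T)
      = (binom_sqrt (-1/\<rho>c) * binom_sqrt (-1/\<rho>c)) * (T * T)"
    by (simp add: algebra_simps)
  also have "\<dots> = fps_of_poly (Pk k)" unfolding binom_sqrt_square T(1) Q fps_of_poly_mult by simp
  also have "\<dots> = (1 - 2 * Fgen k) * (1 - 2 * Fgen k)" using Fgen_square[OF k] by simp
  finally have "1 - 2 * Fgen k = binom_sqrt (-1/\<rho>c) * T"
    by (rule fps_sqrt_unique[symmetric]) (use T(2) in \<open>simp_all add: Fgen_def f_count_0 binom_sqrt_def\<close>)
  with R(1) T(1,3) QK show ?thesis unfolding \<rho>c_def by blast
qed


subsection \<open>Coefficient asymptotics\<close>

lemma neg_half_not_nonpos_int: "(-1/2::real) \<notin> \<int>\<^sub>\<le>\<^sub>0"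
proof
  assume "(-1/2::real) \<in> \<int>\<^sub>\<le>\<^sub>0"
  then obtain m :: int where "(-1/2::real) = of_int m" by (auto elim: nonpos_Ints_cases)
  then have "(2::real) * of_int m = -1" by simp
  then have "2 * m = -1" by (metis of_int_eq_iff of_int_mult of_int_numeral of_int_minus of_int_1)
  then show False by presburger
qed

lemma Gamma_neg_half: "Gamma (-1/2::real) = - 2 * sqrt pi"
proof -
  have "Gamma (-1/2 + 1 :: real) = (-1/2) * Gamma (-1/2)"
    by (rule Gamma_plus1[OF neg_half_not_nonpos_int])
  then have "sqrt pi = (-1/2) * Gamma (-1/2::real)" using Gamma_one_half_real by simp
  then show ?thesis by simp
qed

text \<open>The coefficients of \<open>sqrt(1 - x)\<close> in terms of Euler's product for the Gamma function,
  \<open>Gamma_series z n = n! n^z / (z (z+1) \<dots> (z+n))\<close> at \<open>z = -1/2\<close>.\<close>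

lemma half_gchoose_Gamma_series:
  fixes z :: real
  assumes z: "z = -1/2" and n: "n \<ge> 1"
  shows "real n powr (3/2) * (((1/2::real) gchoose n) * (-1) ^ n) = 1 / (Gamma_series z n * (1 + z / real n))"
proof -
  have np: "real n > 0" using n by simp
  define P where "P = pochhammer z n"
  define F where "F = (fact n :: real)"
  define x where "x = real n powr (1/2)"
  define y where "y = real n powr z"
  have B: "((1/2::real) gchoose n) * (-1) ^ n = P / F"
    by (simp add: gbinomial_pochhammer z P_def F_def power_mult_distrib[symmetric])
  have G: "Gamma_series z n = F * y / (P * (z + real n))"
    using np by (simp add: Gamma_series_def pochhammer_Suc powr_def P_def F_def y_def)
  have zn: "z + real n \<noteq> 0" using n by (simp add: z)
  have Fp: "F > 0" by (simp add: F_def)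
  have yp: "y > 0" using np by (simp add: y_def)
  have x32: "real n powr (3/2) = real n * x"
  proof -
    have "real n powr (3/2) = real n powr (1 + 1/2)" by simp
    also have "\<dots> = real n * real n powr (1/2)" using np by (simp only: powr_add powr_one)
    finally show ?thesis by (simp add: x_def)
  qed
  have xy: "x * y = 1"
    using np by (simp add: x_def y_def z powr_add[symmetric])
  have cancel: "\<And>a b c d. (c::real) \<noteq> 0 \<Longrightarrow> a / (b * c) * (c / d) = a / (b * d)"
    by (simp add: divide_simps)
  have "1 + z / real n = (z + real n) / real n" using np by (simp add: field_simps)
  then have "Gamma_series z n * (1 + z / real n) = F * y / (P * real n)"
    unfolding G using cancel[OF zn] by simp
  then have "1 / (Gamma_series z n * (1 + z / real n)) = P * real n * x / F"
    using xy yp Fp by (simp add: field_simps)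
  also have "\<dots> = real n powr (3/2) * (((1/2::real) gchoose n) * (-1) ^ n)"
    unfolding B x32 by simp
  finally show ?thesis by simp
qed

lemma half_gchoose_asymp:
  "(\<lambda>n. real n powr (3/2) * (((1/2::real) gchoose n) * (-1) ^ n)) \<longlonglongrightarrow> - 1 / (2 * sqrt pi)"
proof -
  define z :: real where "z = -1/2"
  have lim: "(\<lambda>n. 1 / (Gamma_series z n * (1 + z / real n))) \<longlonglongrightarrow> 1 / (Gamma z * (1 + 0))"
    by (intro tendsto_intros Gamma_series_LIMSEQ tendsto_divide_0[OF tendsto_const] filterlim_real_sequentially)
       (auto simp: Gamma_eq_zero_iff z_def neg_half_not_nonpos_int)
  have "(\<lambda>n. real n powr (3/2) * (((1/2::real) gchoose n) * (-1) ^ n)) \<longlonglongrightarrow> 1 / (Gamma z * (1 + 0))"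
    by (rule Lim_transform_eventually[OF lim])
       (auto intro!: eventually_sequentiallyI[of 1] simp: half_gchoose_Gamma_series[OF z_def])
  then show ?thesis unfolding z_def Gamma_neg_half by simp
qed

lemma scaled_convergent_bounded:
  fixes b :: "nat \<Rightarrow> real"
  assumes "(\<lambda>n. real n powr (3/2) * b n) \<longlonglongrightarrow> L"
  shows "\<exists>H. \<forall>m. \<bar>real m powr (3/2) * b m\<bar> \<le> H \<and> \<bar>b m\<bar> \<le> H"
proof -
  have "Bseq (\<lambda>n. real n powr (3/2) * b n)" using assms by (intro convergent_imp_Bseq convergentI)
  then obtain K where "\<forall>m. norm (real m powr (3/2) * b m) \<le> K" by (auto elim!: BseqE)
  then have K: "\<bar>real m powr (3/2) * b m\<bar> \<le> K" for m by simp
  have "\<bar>b m\<bar> \<le> max K \<bar>b 0\<bar>" for m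
  proof (cases "m = 0")
    case False
    then have "real m powr (3/2) \<ge> 1" by (simp add: ge_one_powr_ge_zero)
    then have "\<bar>b m\<bar> \<le> \<bar>real m powr (3/2) * b m\<bar>"
      by (simp add: abs_mult mult_le_cancel_right1)
    then show ?thesis using K[of m] by simp
  qed simp
  moreover have "\<bar>real m powr (3/2) * b m\<bar> \<le> max K \<bar>b 0\<bar>" for m using K[of m] by simp
  ultimately show ?thesis by blast
qed

lemma shifted_limit:
  fixes b :: "nat \<Rightarrow> real"
  assumes hb: "(\<lambda>n. real n powr (3/2) * b n) \<longlonglongrightarrow> L"
  shows "(\<lambda>n. real n powr (3/2) * b (n - i)) \<longlonglongrightarrow> L"
proof -
  have h1: "(\<lambda>n. real (n - i) powr (3/2) * b (n - i)) \<longlonglongrightarrow> L"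
    using filterlim_compose[OF hb filterlim_minus_const_nat_at_top[of i]] by (simp add: o_def)
  have "(\<lambda>n. real n / (real n - real i)) \<longlonglongrightarrow> 1"
    by real_asymp
  then have h2: "(\<lambda>n. (real n / (real n - real i)) powr (3/2)) \<longlonglongrightarrow> 1"
    using tendsto_powr[OF _ tendsto_const, of _ 1 sequentially "3/2"] by simp
  have "(\<lambda>n. (real n / (real n - real i)) powr (3/2) * (real (n - i) powr (3/2) * b (n - i))) \<longlonglongrightarrow> 1 * L"
    by (rule tendsto_mult[OF h2 h1])
  moreover have "eventually (\<lambda>n. (real n / (real n - real i)) powr (3/2) * (real (n - i) powr (3/2) * b (n - i))
      = real n powr (3/2) * b (n - i)) sequentially"
  proof (rule eventually_sequentiallyI[of "i + 1"])
    fix n assume n: "i + 1 \<le> n"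
    then have "real n - real i > 0" "real n > 0" "real (n - i) = real n - real i" by auto
    then show "(real n / (real n - real i)) powr (3/2) * (real (n - i) powr (3/2) * b (n - i))
      = real n powr (3/2) * b (n - i)"
      by (simp add: powr_divide)
  qed
  ultimately show ?thesis by (simp add: Lim_transform_eventually)
qed

text \<open>Convolution with a summable sequence \<open>v\<close>: the terms with \<open>i \<le> n/2\<close> converge to \<open>(\<Sum>v) L\<close>
  by dominated convergence, since there \<open>n^(3/2) |b (n - i)|\<close> stays bounded.\<close>

lemma convolution_head_limit:
  fixes b v :: "nat \<Rightarrow> real"
  assumes hb: "(\<lambda>n. real n powr (3/2) * b n) \<longlonglongrightarrow> L" and hv: "summable (\<lambda>i. \<bar>v i\<bar>)"
  shows "(\<lambda>n. \<Sum>i\<le>n. if 2 * i \<le> n then v i * (real n powr (3/2) * b (n - i)) else 0) \<longlonglongrightarrow> (\<Sum>i. v i) * L"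
proof -
  obtain H where H: "\<And>m. \<bar>real m powr (3/2) * b m\<bar> \<le> H"
    using scaled_convergent_bounded[OF hb] by blast
  define s where "s n i = (if 2 * i \<le> n then v i * (real n powr (3/2) * b (n - i)) else 0)" for n i
  define w where "w i = \<bar>v i\<bar> * (2 powr (3/2) * \<bar>H\<bar>)" for i
  have sbound: "\<bar>s n i\<bar> \<le> w i" for n i
  proof (cases "2 * i \<le> n")
    case True
    have "real n \<le> 2 * real (n - i)" using True by simp
    then have "real n powr (3/2) \<le> (2 * real (n - i)) powr (3/2)" by (simp add: powr_mono2)
    also have "\<dots> = 2 powr (3/2) * real (n - i) powr (3/2)" by (simp add: powr_mult)
    finally have "\<bar>real n powr (3/2) * b (n - i)\<bar> \<le> 2 powr (3/2) * real (n - i) powr (3/2) * \<bar>b (n - i)\<bar>"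
      by (simp add: abs_mult mult_right_mono)
    also have "\<dots> \<le> 2 powr (3/2) * \<bar>H\<bar>"
      using H[of "n - i"] by (simp add: abs_mult mult.assoc)
    finally show ?thesis using True by (simp add: s_def w_def abs_mult mult_left_mono)
  qed (simp add: s_def w_def)
  have w_int: "integrable (count_space UNIV) w"
    unfolding integrable_count_space_nat_iff w_def using hv by (simp add: abs_mult summable_mult2)
  have slim: "(\<lambda>n. s n i) \<longlonglongrightarrow> v i * L" for i
  proof -
    have "(\<lambda>n. v i * (real n powr (3/2) * b (n - i))) \<longlonglongrightarrow> v i * L"
      by (intro tendsto_mult tendsto_const shifted_limit[OF hb])
    moreover have "eventually (\<lambda>n. v i * (real n powr (3/2) * b (n - i)) = s n i) sequentially"
      by (rule eventually_sequentiallyI[of "2 * i"]) (simp add: s_def)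
    ultimately show ?thesis by (rule Lim_transform_eventually)
  qed
  have DCT: "(\<lambda>n. integral\<^sup>L (count_space UNIV) (s n)) \<longlonglongrightarrow> integral\<^sup>L (count_space UNIV) (\<lambda>i. v i * L)"
    by (rule integral_dominated_convergence[where w = w]) (auto simp: w_int slim sbound)
  have int_lim: "integrable (count_space UNIV) (\<lambda>i. v i * L)"
    by (rule integrable_dominated_convergence[where w = w and s = s]) (auto simp: w_int slim sbound)
  have int_s: "integrable (count_space UNIV) (s n)" for n
    by (rule integrable_dominated_convergence2[where w = w and f = "\<lambda>i. v i * L"]) (auto simp: w_int slim sbound)
  have I1: "integral\<^sup>L (count_space UNIV) (s n) = (\<Sum>i\<le>n. s n i)" for n
    unfolding integral_count_space_nat[OF int_s] by (rule suminf_finite) (auto simp: s_def)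
  have I2: "integral\<^sup>L (count_space UNIV) (\<lambda>i. v i * L) = (\<Sum>i. v i) * L"
    using integral_count_space_nat[OF int_lim] summable_rabs_cancel[OF hv] by (simp add: suminf_mult2)
  have "(\<lambda>n. \<Sum>i\<le>n. s n i) \<longlonglongrightarrow> (\<Sum>i. v i) * L"
    using DCT unfolding I1 I2 .
  then show ?thesis by (simp add: s_def)
qed

text \<open>The terms with \<open>i > n/2\<close> are killed by the geometric decay of \<open>v\<close>.\<close>

lemma convolution_tail_limit:
  fixes b v :: "nat \<Rightarrow> real"
  assumes hb: "\<And>m. \<bar>b m\<bar> \<le> B" and hv: "\<And>i. \<bar>v i\<bar> \<le> C * \<theta> ^ i" and th: "0 < \<theta>" "\<theta> < 1"
  shows "(\<lambda>n. \<Sum>i\<le>n. if 2 * i \<le> n then 0 else v i * (real n powr (3/2) * b (n - i))) \<longlonglongrightarrow> 0"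
proof -
  define q where "q = sqrt \<theta>"
  have q: "0 < q" "q < 1" using th by (auto simp: q_def)
  have C0: "C \<ge> 0" using hv[of 0] by simp
  have B0: "B \<ge> 0" using hb[of 0] by simp
  have term_bound: "\<bar>if 2 * i \<le> n then 0 else v i * (real n powr (3/2) * b (n - i))\<bar> \<le> C * B * (real n powr (3/2) * q ^ n)"
    for n i
  proof (cases "2 * i \<le> n")
    case False
    have "\<theta> ^ i = q ^ (2 * i)" using th by (simp add: q_def power_mult)
    also have "\<dots> \<le> q ^ n" using False q by (intro power_decreasing) auto
    finally have "\<bar>v i\<bar> \<le> C * q ^ n" using hv[of i] C0 by (meson mult_left_mono order_trans)
    then have "\<bar>v i\<bar> * \<bar>b (n - i)\<bar> \<le> C * q ^ n * B"
      using hb[of "n - i"] B0 by (intro mult_mono) auto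
    then show ?thesis using False
      by (simp add: abs_mult) (smt (verit) mult.commute mult.left_commute mult_left_mono powr_ge_zero)
  qed (use C0 B0 q in simp)
  have bound: "\<bar>\<Sum>i\<le>n. if 2 * i \<le> n then 0 else v i * (real n powr (3/2) * b (n - i))\<bar>
      \<le> C * B * ((real n + 1) * real n powr (3/2) * q ^ n)" for n
  proof -
    have "\<bar>\<Sum>i\<le>n. if 2 * i \<le> n then 0 else v i * (real n powr (3/2) * b (n - i))\<bar>
        \<le> (\<Sum>i\<le>n. C * B * (real n powr (3/2) * q ^ n))"
      by (rule order_trans[OF sum_abs sum_mono]) (rule term_bound)
    then show ?thesis by (simp add: algebra_simps)
  qed
  have "(\<lambda>n. (real n + 1) * real n powr (3/2) * q ^ n) \<longlonglongrightarrow> 0"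
    using q by real_asymp
  then have "(\<lambda>n. C * B * ((real n + 1) * real n powr (3/2) * q ^ n)) \<longlonglongrightarrow> 0"
    by (simp add: tendsto_mult_right_zero)
  then show ?thesis
    by (rule Lim_null_comparison[rotated]) (use bound in auto)
qed

lemma convolution_limit:
  fixes b v :: "nat \<Rightarrow> real"
  assumes hb: "(\<lambda>n. real n powr (3/2) * b n) \<longlonglongrightarrow> L"
    and hv: "\<And>i. \<bar>v i\<bar> \<le> C * \<theta> ^ i" and th: "0 < \<theta>" "\<theta> < 1"
  shows "(\<lambda>n. real n powr (3/2) * (\<Sum>i\<le>n. v i * b (n - i))) \<longlonglongrightarrow> (\<Sum>i. v i) * L"
proof -
  obtain H where H: "\<And>m. \<bar>b m\<bar> \<le> H" using scaled_convergent_bounded[OF hb] by blast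
  have "summable (\<lambda>i. C * \<theta> ^ i)" using th by (intro summable_mult summable_geometric) auto
  then have "summable (\<lambda>i. \<bar>v i\<bar>)" by (rule summable_comparison_test'[where N = 0]) (use hv in auto)
  have "real n powr (3/2) * (\<Sum>i\<le>n. v i * b (n - i))
      = (\<Sum>i\<le>n. if 2 * i \<le> n then v i * (real n powr (3/2) * b (n - i)) else 0)
      + (\<Sum>i\<le>n. if 2 * i \<le> n then 0 else v i * (real n powr (3/2) * b (n - i)))" for n
    unfolding sum_distrib_left sum.distrib[symmetric] by (intro sum.cong) auto
  then show ?thesis
    using tendsto_add[OF convolution_head_limit[OF hb \<open>summable (\<lambda>i. \<bar>v i\<bar>)\<close>]
        convolution_tail_limit[OF H hv th]] by simp
qed

lemma geometric_domination:
  fixes T :: "complex fps"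
  assumes rp: "0 < \<rho>" and R: "\<rho> < R" and bound: "\<And>n. cmod (fps_nth T n) \<le> (real n + 1) ^ d * (1/R) ^ n"
  shows "\<exists>C \<theta>. 0 < \<theta> \<and> \<theta> < 1 \<and> (\<forall>n. cmod (fps_nth T n) * \<rho> ^ n \<le> C * \<theta> ^ n)"
proof -
  define \<theta> where "\<theta> = sqrt (\<rho> / R)"
  have th: "0 < \<theta>" "\<theta> < 1" using R rp by (auto simp: \<theta>_def)
  have "(\<lambda>i. (real i + 1) ^ d * \<theta> ^ i) \<longlonglongrightarrow> 0" using th by real_asymp
  then have "Bseq (\<lambda>i. (real i + 1) ^ d * \<theta> ^ i)" by (intro convergent_imp_Bseq convergentI)
  then obtain C where "\<forall>i. norm ((real i + 1) ^ d * \<theta> ^ i) \<le> C" by (auto elim!: BseqE)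
  then have C: "(real i + 1) ^ d * \<theta> ^ i \<le> C" for i by (metis abs_ge_self order_trans real_norm_def)
  have "cmod (fps_nth T n) * \<rho> ^ n \<le> C * \<theta> ^ n" for n
  proof -
    have "cmod (fps_nth T n) * \<rho> ^ n \<le> (real n + 1) ^ d * (1/R) ^ n * \<rho> ^ n"
      using bound[of n] rp by (intro mult_right_mono) auto
    also have "\<dots> = ((real n + 1) ^ d * \<theta> ^ n) * \<theta> ^ n"
    proof -
      have "\<theta> ^ n * \<theta> ^ n = (\<rho> / R) ^ n" using R rp by (simp add: \<theta>_def power_mult_distrib[symmetric])
      then show ?thesis by (simp add: power_divide mult.assoc)
    qed
    also have "\<dots> \<le> C * \<theta> ^ n" using C[of n] th by (intro mult_right_mono) auto
    finally show ?thesis .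
  qed
  with th show ?thesis by blast
qed

lemma dominated_series_summable:
  fixes T :: "complex fps"
  assumes "0 \<le> \<rho>" "0 < \<theta>" "\<theta> < 1" "\<And>n. cmod (fps_nth T n) * \<rho> ^ n \<le> C * \<theta> ^ n"
  shows "summable (\<lambda>i. norm (fps_nth T i * of_real \<rho> ^ i))"
proof (rule summable_comparison_test')
  show "summable (\<lambda>i. C * \<theta> ^ i)" using assms by (intro summable_mult summable_geometric) auto
  show "norm (norm (fps_nth T i * of_real \<rho> ^ i)) \<le> C * \<theta> ^ i" for i
    using assms(1) assms(4)[of i] by (simp add: norm_mult norm_power)
qed

lemma sqrt_singularity_limit:
  fixes T :: "complex fps" and s :: "nat \<Rightarrow> real" and \<rho> :: real
  assumes rp: "0 < \<rho>" and th: "0 < \<theta>" "\<theta> < 1" and dom: "\<And>n. cmod (fps_nth T n) * \<rho> ^ n \<le> C * \<theta> ^ n"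
    and s: "\<And>n. complex_of_real (s n) = fps_nth (binom_sqrt (- 1 / of_real \<rho>) * T) n"
  shows "(\<lambda>n. real n powr (3/2) * (s n * \<rho> ^ n))
      \<longlonglongrightarrow> Re (\<Sum>i. fps_nth T i * of_real \<rho> ^ i) * (- 1 / (2 * sqrt pi))"
proof -
  define b where "b m = ((1/2::real) gchoose m) * (-1) ^ m" for m
  define v where "v i = Re (fps_nth T i) * \<rho> ^ i" for i
  have coeff: "fps_nth (binom_sqrt (- 1 / of_real \<rho>)) i * of_real (\<rho> ^ i) = of_real (b i)" for i
  proof -
    have "fps_nth (binom_sqrt (- 1 / of_real \<rho>)) i * of_real (\<rho> ^ i)
        = of_real ((1/2::real) gchoose i) * ((- 1 / of_real \<rho>) * of_real \<rho>) ^ i"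
      by (simp only: binom_sqrt_def fps_nth_Abs_fps power_mult_distrib of_real_power mult.assoc)
    also have "(- 1 / of_real \<rho>) * of_real \<rho> = (-1 :: complex)" using rp by simp
    finally show ?thesis by (simp add: b_def)
  qed
  have conv: "s n * \<rho> ^ n = (\<Sum>i\<le>n. v i * b (n - i))" for n
  proof -
    have "complex_of_real (s n * \<rho> ^ n)
        = (\<Sum>i\<le>n. (fps_nth (binom_sqrt (- 1 / of_real \<rho>)) i * of_real (\<rho> ^ i))
                  * (fps_nth T (n - i) * of_real (\<rho> ^ (n - i))))"
      unfolding of_real_mult s fps_mult_nth atLeast0AtMost sum_distrib_right
      by (intro sum.cong refl) (simp add: power_add[symmetric] algebra_simps)
    also have "\<dots> = (\<Sum>i\<le>n. of_real (b i) * (fps_nth T (n - i) * of_real (\<rho> ^ (n - i))))"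
      unfolding coeff ..
    finally have "s n * \<rho> ^ n = Re (\<Sum>i\<le>n. of_real (b i) * (fps_nth T (n - i) * of_real (\<rho> ^ (n - i))))"
      by (metis Re_complex_of_real)
    also have "\<dots> = (\<Sum>i\<le>n. b i * v (n - i))"
      by (simp add: Re_sum v_def flip: of_real_power)
    also have "\<dots> = (\<Sum>i\<le>n. v i * b (n - i))"
      by (rule sum.reindex_bij_witness[of _ "\<lambda>i. n - i" "\<lambda>i. n - i"]) auto
    finally show ?thesis .
  qed
  have vbound: "\<bar>v i\<bar> \<le> C * \<theta> ^ i" for i
    using order_trans[OF _ dom[of i]] abs_Re_le_cmod[of "fps_nth T i"] rp
    by (simp add: v_def abs_mult mult_right_mono)
  have sum_v: "(\<Sum>i. v i) = Re (\<Sum>i. fps_nth T i * of_real \<rho> ^ i)"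
    using summable_norm_cancel[OF dominated_series_summable[OF _ th dom]] rp
    by (simp add: Re_suminf v_def flip: of_real_power)
  have hb: "(\<lambda>n. real n powr (3/2) * b n) \<longlonglongrightarrow> - 1 / (2 * sqrt pi)"
    using half_gchoose_asymp by (simp add: b_def)
  show ?thesis unfolding conv sum_v[symmetric] by (rule convolution_limit[OF hb vbound th])
qed

lemma asymp_equiv_from_scaled_limit:
  fixes a :: "nat \<Rightarrow> real" and \<rho> K :: real
  assumes rp: "0 < \<rho>" and K: "0 < K"
    and lim: "(\<lambda>n. real n powr (3/2) * (a n * \<rho> ^ n)) \<longlonglongrightarrow> sqrt K / (4 * sqrt pi)"
  shows "a \<sim>[at_top] (\<lambda>n. 1 / 4 * sqrt (K / (pi * real n ^ 3)) * (1 / \<rho>) ^ n)"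
proof (rule asymp_equivI')
  have "(\<lambda>n. real n powr (3/2) * (a n * \<rho> ^ n) * (4 * sqrt pi / sqrt K)) \<longlonglongrightarrow> 1"
    using tendsto_mult_right[OF lim, of "4 * sqrt pi / sqrt K"] K by simp
  moreover have "eventually (\<lambda>n. real n powr (3/2) * (a n * \<rho> ^ n) * (4 * sqrt pi / sqrt K)
      = a n / (1 / 4 * sqrt (K / (pi * real n ^ 3)) * (1 / \<rho>) ^ n)) sequentially"
  proof (rule eventually_sequentiallyI[of 1])
    fix n :: nat assume "1 \<le> n"
    then have np: "real n > 0" by simp
    have "sqrt (real n ^ 3) = real n powr (3/2)"
    proof -
      have "sqrt (real n ^ 3) = (real n ^ 3) powr (1/2)" by (rule powr_half_sqrt[symmetric]) simp
      also have "real n ^ 3 = real n powr (real 3)" using powr_realpow[OF np, of 3] by simp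
      also have "(real n powr (real 3)) powr (1/2) = real n powr (real 3 * (1/2))" by (rule powr_powr)
      finally show ?thesis by simp
    qed
    then have "sqrt (K / (pi * real n ^ 3)) = sqrt K / (sqrt pi * real n powr (3/2))"
      by (simp add: real_sqrt_divide real_sqrt_mult)
    moreover have "x * (a n * \<rho> ^ n) * (4 * sp / sk) = a n / (1 / 4 * (sk / (sp * x)) * (1 / \<rho>) ^ n)"
      if "x > 0" "sp > 0" "sk > 0" for x sp sk :: real
      using that rp by (simp add: field_simps power_one_over)
    ultimately show "real n powr (3/2) * (a n * \<rho> ^ n) * (4 * sqrt pi / sqrt K)
      = a n / (1 / 4 * sqrt (K / (pi * real n ^ 3)) * (1 / \<rho>) ^ n)"
      using np K by simp
  qed
  ultimately show "(\<lambda>n. a n / (1 / 4 * sqrt (K / (pi * real n ^ 3)) * (1 / \<rho>) ^ n)) \<longlonglongrightarrow> 1"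
    by (rule Lim_transform_eventually)
qed


lemma Re_square_of_sqrt_pos:
  fixes z :: complex and K :: real
  assumes sq: "z * z = of_real K" and K: "0 < K"
  shows "(Re z)\<^sup>2 = K"
proof -
  have re: "(Re z)\<^sup>2 - (Im z)\<^sup>2 = K" using arg_cong[OF sq, of Re] by (simp add: power2_eq_square)
  have im: "Re z * Im z = 0" using arg_cong[OF sq, of Im] by auto
  have "Im z = 0"
  proof (rule ccontr)
    assume "Im z \<noteq> 0"
    then have "Re z = 0" using im by simp
    then show False using re K zero_le_power2[of "Im z"] by simp
  qed
  then show ?thesis using re by simp
qed


text \<open>The coefficients of \<open>1 - 2F\<close> are \<open>-2 f_n\<close> for \<open>n \<ge> 1\<close>, so the singularity analysis gives
  \<open>n^(3/2) \<rho>^n f_n \<longrightarrow> T(\<rho>) / (4 sqrt pi)\<close>; as \<open>T(\<rho>)\<^sup>2 = K\<close> and \<open>f_n \<ge> 0\<close>, \<open>T(\<rho>) = sqrt K\<close>.\<close>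

lemma f_count_scaled_limit:
  fixes k :: nat and \<rho> :: real
  assumes "k \<ge> 2" and "\<rho> > 0"
    and "1 - 4 * \<rho> + 2 ^ (k + 1) * \<rho> ^ (k + 1) = 0"
    and "\<And>y::real. 0 < y \<Longrightarrow> y < \<rho> \<Longrightarrow> 1 - 4 * y + 2 ^ (k + 1) * y ^ (k + 1) \<noteq> 0"
  shows "(\<lambda>n. real n powr (3/2) * (real (f_count k n) * \<rho> ^ n))
    \<longlonglongrightarrow> sqrt (4 * \<rho> - real (k + 1) * 2 ^ (k + 1) * \<rho> ^ (k + 1)) / (4 * sqrt pi)"
proof -
  define K where "K = 4 * \<rho> - real (k + 1) * 2 ^ (k + 1) * \<rho> ^ (k + 1)"
  have K: "K > 0" using rho_properties(3)[OF assms] by (simp add: K_def)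
  obtain T Q R d where R: "\<rho> < R" and bound: "\<And>n. cmod (fps_nth T n) \<le> (real n + 1) ^ d * (1/R) ^ n"
    and TQ: "T * T = fps_of_poly Q" and QK: "poly Q (of_real \<rho>) = of_real K"
    and fac: "1 - 2 * Fgen k = binom_sqrt (- 1 / of_real \<rho>) * T"
    using Fgen_factorization[OF assms, folded K_def] by blast
  obtain C \<theta> where th: "0 < \<theta>" "\<theta> < 1" and dom: "\<And>n. cmod (fps_nth T n) * \<rho> ^ n \<le> C * \<theta> ^ n"
    using geometric_domination[OF assms(2) R bound] by blast
  define s where "s n = (if n = 0 then 1 else 0) - 2 * real (f_count k n)" for n
  define V where "V = Re (\<Sum>i. fps_nth T i * of_real \<rho> ^ i)"
  have "complex_of_real (s n) = fps_nth (binom_sqrt (- 1 / of_real \<rho>) * T) n" for n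
    unfolding fac[symmetric] by (simp add: s_def Fgen_def)
  then have lim: "(\<lambda>n. real n powr (3/2) * (s n * \<rho> ^ n)) \<longlonglongrightarrow> V * (- 1 / (2 * sqrt pi))"
    unfolding V_def using sqrt_singularity_limit[OF assms(2) th dom] by blast
  have "V\<^sup>2 = K"
    using Re_square_of_sqrt_pos[OF _ K] fps_sqrt_eval[OF TQ dominated_series_summable[OF _ th dom]]
      assms(2) QK unfolding V_def by simp
  moreover have "V * (- 1 / (2 * sqrt pi)) \<le> 0"
  proof (rule LIMSEQ_le_const2[OF lim])
    show "\<exists>N. \<forall>n\<ge>N. real n powr (3/2) * (s n * \<rho> ^ n) \<le> 0"
      using assms(2) by (intro exI[of _ 1]) (auto intro!: mult_nonneg_nonpos simp: s_def)
  qed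
  then have "V \<ge> 0" by (simp add: pos_le_divide_eq)
  ultimately have V: "V = sqrt K" using real_sqrt_unique by metis
  have "(\<lambda>n. - 1 / 2 * (real n powr (3/2) * (s n * \<rho> ^ n))) \<longlonglongrightarrow> sqrt K / (4 * sqrt pi)"
    using tendsto_mult_left[OF lim, of "- 1 / 2"] unfolding V by simp
  then show ?thesis unfolding K_def[symmetric]
    by (rule Lim_transform_eventually) (auto intro!: eventually_sequentiallyI[of 1] simp: s_def)
qed

theorem mainTheorem5:
  fixes k :: nat and \<rho> :: real
  assumes "k \<ge> 2"
    and "\<rho> > 0"
    and "1 - 4 * \<rho> + 2 ^ (k + 1) * \<rho> ^ (k + 1) = 0"
    and "\<And>y::real. 0 < y \<Longrightarrow> y < \<rho> \<Longrightarrow> 1 - 4 * y + 2 ^ (k + 1) * y ^ (k + 1) \<noteq> 0"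
  shows "(\<lambda>n. real (f_count k n)) \<sim>[at_top]
    (\<lambda>n. 1 / 4 * sqrt ((4 * \<rho> - real (k + 1) * 2 ^ (k + 1) * \<rho> ^ (k + 1)) / (pi * real n ^ 3))
          * (1 / \<rho>) ^ n)"
proof (rule asymp_equiv_from_scaled_limit[OF assms(2)])
  show "4 * \<rho> - real (k + 1) * 2 ^ (k + 1) * \<rho> ^ (k + 1) > 0"
    by (rule rho_properties(3)[OF assms])
  show "(\<lambda>n. real n powr (3/2) * (real (f_count k n) * \<rho> ^ n))
      \<longlonglongrightarrow> sqrt (4 * \<rho> - real (k + 1) * 2 ^ (k + 1) * \<rho> ^ (k + 1)) / (4 * sqrt pi)"
    by (rule f_count_scaled_limit[OF assms])
qed

end
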